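(* Let $\rho=[uvwx]\subset\mathbb{R}^3$ be a unit rhombus. Suppose there is a coloring $\chi:\mathbb{R}^3\to\{1,2,3\}$ with no rainbow triangles such that $\chi(u)=\chi(v)=1$, $\chi(w)=2$, $\chi(x)=3$. Then $\rho$ cannot be domed.
   Context: A unit rhombus is a closed polygon $[uvwx]$ in $\mathbb{R}^3$ with all four sides of length $1$. A rainbow triangle for $\chi$ is a triple of points $x,y,z\in\mathbb{R}^3$ with $|xy|=|yz|=|zx|=1$ and $\{\chi(x),\chi(y),\chi(z)\}=\{1,2,3\}$. A closed polygon with unit edges can be domed if there is a finite connected 2-dimensional simplicial complex which is a compact surface with a single boundary cycle, with a map to $\mathbb{R}^3$ linear on simplices sending each triangle to a unit equilateral triangle and the boundary cycle onto the polygon vertex by vertex in cyclic order (no embedding/immersion required). *)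

theory Defs
  imports "HOL-Analysis.Analysis"
begin

type_synonym point3 = "real ^ 3"

definition unit_rhombus :: "point3 \<Rightarrow> point3 \<Rightarrow> point3 \<Rightarrow> point3 \<Rightarrow> bool" where
  "unit_rhombus u v w x \<longleftrightarrow>
     dist u v = 1 \<and> dist v w = 1 \<and> dist w x = 1 \<and> dist x u = 1"

definition rainbow_triangle :: "(point3 \<Rightarrow> nat) \<Rightarrow> point3 \<Rightarrow> point3 \<Rightarrow> point3 \<Rightarrow> bool" where
  "rainbow_triangle col x y z \<longleftrightarrow>
     dist x y = 1 \<and> dist y z = 1 \<and> dist z x = 1 \<and> {col x, col y, col z} = {1, 2, 3}"

text \<open>Abstract 2-dimensional simplicial complexes, given by their set of triangles
  (3-element vertex sets). Vertices and edges are those of the triangles (pure complex).\<close>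

definition cx_vertices :: "'v set set \<Rightarrow> 'v set" where
  "cx_vertices T = \<Union>T"

definition cx_edges :: "'v set set \<Rightarrow> 'v set set" where
  "cx_edges T = {e. card e = 2 \<and> (\<exists>t\<in>T. e \<subseteq> t)}"

definition edge_degree :: "'v set set \<Rightarrow> 'v set \<Rightarrow> nat" where
  "edge_degree T e = card {t\<in>T. e \<subseteq> t}"

definition boundary_edges :: "'v set set \<Rightarrow> 'v set set" where
  "boundary_edges T = {e\<in>cx_edges T. edge_degree T e = 1}"

text \<open>Finite connected 2-dim simplicial complex that is a compact surface (possibly with
  boundary): every edge lies in one or two triangles and the link of every vertex is
  connected (hence a path or a cycle).\<close>

definition compact_surface_complex :: "'v set set \<Rightarrow> bool" where
  "compact_surface_complex T \<longleftrightarrow>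
     finite T \<and> T \<noteq> {} \<and> (\<forall>t\<in>T. card t = 3) \<and>
     (\<forall>e\<in>cx_edges T. edge_degree T e = 1 \<or> edge_degree T e = 2) \<and>
     (\<forall>a\<in>cx_vertices T. \<forall>b\<in>cx_vertices T. (\<lambda>x y. {x, y} \<in> cx_edges T)\<^sup>*\<^sup>* a b) \<and>
     (\<forall>v\<in>cx_vertices T. \<forall>a b. {v, a} \<in> cx_edges T \<longrightarrow> {v, b} \<in> cx_edges T \<longrightarrow>
         (\<lambda>x y. {v, x, y} \<in> T)\<^sup>*\<^sup>* a b)"

definition can_be_domed :: "point3 list \<Rightarrow> bool" where
  "can_be_domed P \<longleftrightarrow>
     (\<exists>(T :: nat set set) (f :: nat \<Rightarrow> point3) (b :: nat list).
        compact_surface_complex T \<and>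
        (\<forall>t\<in>T. \<forall>p\<in>t. \<forall>q\<in>t. p \<noteq> q \<longrightarrow> dist (f p) (f q) = 1) \<and>
        length b = length P \<and> distinct b \<and>
        boundary_edges T = {{b ! i, b ! ((i + 1) mod length b)} | i. i < length b} \<and>
        (\<forall>i < length b. f (b ! i) = P ! i))"

end

theory Submission
  imports Defs
begin

text \<open>Count, with multiplicity, the pairs (edge e, triangle t) of the dome with e \<subseteq> t and
  e coloured {1, 2} under col \<circ> f. A non-rainbow triangle contains an even number of such
  edges, so the total is even. An interior edge lies in two triangles, so modulo 2 the total
  is the number of {1, 2}-coloured boundary edges; but on the boundary cycle of the rhombus,
  coloured 1, 1, 2, 3, exactly one edge is coloured {1, 2}.\<close>

lemma sum_edge_degree_eq_sum_card_edges_in_triangles: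
  assumes "finite T" "finite E"
  shows "(\<Sum>e\<in>E. edge_degree T e) = (\<Sum>t\<in>T. card {e\<in>E. e \<subseteq> t})"
proof -
  have "(\<Sum>e\<in>E. edge_degree T e) = (\<Sum>e\<in>E. \<Sum>t\<in>T. if e \<subseteq> t then 1 else 0)"
    unfolding edge_degree_def using assms by (simp add: sum.inter_filter[symmetric])
  also have "\<dots> = (\<Sum>t\<in>T. \<Sum>e\<in>E. if e \<subseteq> t then 1 else 0)"
    by (rule sum.swap)
  also have "\<dots> = (\<Sum>t\<in>T. card {e\<in>E. e \<subseteq> t})"
    using assms by (simp add: sum.inter_filter[symmetric])
  finally show ?thesis .
qed

lemma finite_cx_edges:
  assumes "finite T" "\<forall>t\<in>T. finite t"
  shows "finite (cx_edges T)"
proof -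
  have "cx_edges T \<subseteq> Pow (\<Union>T)"
    unfolding cx_edges_def by auto
  then show ?thesis
    using assms by (meson finite_Pow_iff finite_Union finite_subset)
qed

lemma even_card_boundary_edges:
  fixes T :: "'v set set" and P :: "'v set \<Rightarrow> bool"
  assumes fin: "finite T" "\<forall>t\<in>T. finite t"
    and degree_le_2: "\<forall>e\<in>cx_edges T. edge_degree T e \<le> 2"
    and even_in_triangles: "\<forall>t\<in>T. even (card {e. e \<subseteq> t \<and> card e = 2 \<and> P e})"
  shows "even (card {e \<in> boundary_edges T. P e})"
proof -
  define E where "E = {e \<in> cx_edges T. P e}"
  have "finite E"
    unfolding E_def using finite_cx_edges[OF fin] by simp
  have "{e\<in>E. e \<subseteq> t} = {e. e \<subseteq> t \<and> card e = 2 \<and> P e}" if "t \<in> T" for t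
    unfolding E_def cx_edges_def using that by blast
  then have "even (\<Sum>e\<in>E. edge_degree T e)"
    using sum_edge_degree_eq_sum_card_edges_in_triangles[OF fin(1) \<open>finite E\<close>] even_in_triangles
    by (simp add: dvd_sum)
  then have "even (card {e\<in>E. odd (edge_degree T e)})"
    using \<open>finite E\<close> by (simp add: even_sum_iff)
  moreover have "{e\<in>E. odd (edge_degree T e)} = {e \<in> boundary_edges T. P e}"
  proof -
    have "odd (edge_degree T e) \<longleftrightarrow> edge_degree T e = 1" if "e \<in> cx_edges T" for e
    proof -
      have "edge_degree T e \<le> 2"
        using degree_le_2 that by blast
      then show ?thesis by presburger
    qed
    then show ?thesis
      unfolding E_def boundary_edges_def by auto
  qed
  ultimately show ?thesis by simp
qed

lemma even_card_edges_coloured_12_of_non_rainbow_triangle: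
  fixes g :: "'a \<Rightarrow> nat"
  assumes "card t = 3" "g ` t \<subseteq> {1, 2, 3}" "g ` t \<noteq> {1, 2, 3}"
  shows "even (card {e. e \<subseteq> t \<and> card e = 2 \<and> g ` e = {1, 2}})"
proof -
  obtain a b c where t: "t = {a, b, c}" and distinct: "a \<noteq> b" "a \<noteq> c" "b \<noteq> c"
    using assms(1) by (metis card_3_iff)
  \<comment> \<open>Unrestricted simp loops on the set equations between numerals below.\<close>
  have "g ` t = {g a, g b, g c}"
    unfolding t by (simp only: image_insert image_empty)
  then have colours: "g a \<in> {1, 2, 3}" "g b \<in> {1, 2, 3}" "g c \<in> {1, 2, 3}"
      "{g a, g b, g c} \<noteq> {1, 2, 3}"
    using assms(2,3) by (simp_all only: insert_subset) (simp only: not_False_eq_True)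
  let ?coloured_12 = "\<lambda>e. g ` e = {1, 2}"
  have edges: "{e. e \<subseteq> t \<and> card e = 2} = {{a, b}, {a, c}, {b, c}}"
    unfolding t using distinct by (auto simp: card_2_iff)
  have "{e. e \<subseteq> t \<and> card e = 2 \<and> ?coloured_12 e} = {e \<in> {e. e \<subseteq> t \<and> card e = 2}. ?coloured_12 e}"
    by (simp only: mem_Collect_eq conj_assoc)
  then have "{e. e \<subseteq> t \<and> card e = 2 \<and> ?coloured_12 e} = {e \<in> {{a, b}, {a, c}, {b, c}}. ?coloured_12 e}"
    unfolding edges .
  then have "card {e. e \<subseteq> t \<and> card e = 2 \<and> ?coloured_12 e}
      = (\<Sum>e\<in>{{a, b}, {a, c}, {b, c}}. if ?coloured_12 e then 1 else 0)"
    by (simp add: sum.inter_filter[symmetric])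
  also have "\<dots> = (if {g a, g b} = {1, 2} then 1 else 0) + (if {g a, g c} = {1, 2} then 1 else 0)
      + (if {g b, g c} = {1, 2} then 1 else 0)"
    using distinct by (simp add: doubleton_eq_iff)
  also have "even \<dots>"
    using colours by (auto simp: doubleton_eq_iff insert_commute)
  finally show ?thesis .
qed

lemma non_rainbow_unit_triangle_misses_a_colour:
  fixes f :: "'v \<Rightarrow> point3"
  assumes "\<forall>p q r. \<not> rainbow_triangle col p q r"
    and "card t = 3" "\<forall>p\<in>t. \<forall>q\<in>t. p \<noteq> q \<longrightarrow> dist (f p) (f q) = 1"
  shows "(col \<circ> f) ` t \<noteq> {1, 2, 3}"
proof -
  obtain a b c where t: "t = {a, b, c}" and "a \<noteq> b" "a \<noteq> c" "b \<noteq> c"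
    using assms(2) by (metis card_3_iff)
  then have "dist (f a) (f b) = 1" "dist (f b) (f c) = 1" "dist (f c) (f a) = 1"
    using assms(3) by auto
  then have "{col (f a), col (f b), col (f c)} \<noteq> {1, 2, 3}"
    using assms(1) unfolding rainbow_triangle_def by blast
  then show ?thesis
    unfolding t by simp
qed

lemma cyclic_edges_of_length_4:
  assumes "length b = 4"
  shows "{{b ! i, b ! ((i + 1) mod length b)} | i. i < length b}
    = {{b ! 0, b ! 1}, {b ! 1, b ! 2}, {b ! 2, b ! 3}, {b ! 3, b ! 0}}"
proof -
  have successors: "(0 + 1) mod 4 = (1::nat)" "(1 + 1) mod 4 = (2::nat)"
    "(2 + 1) mod 4 = (3::nat)" "(3 + 1) mod 4 = (0::nat)"
    by simp_all
  have "{{b ! i, b ! ((i + 1) mod length b)} | i. i < length b}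
      = (\<lambda>i. {b ! i, b ! ((i + 1) mod 4)}) ` {i. i < 4}"
    unfolding assms by blast
  also have "{i. i < (4::nat)} = {0, 1, 2, 3}"
    by auto
  finally show ?thesis
    by (simp only: image_insert image_empty successors)
qed

lemma even_card_boundary_edges_coloured_12:
  fixes T :: "'v set set" and f :: "'v \<Rightarrow> point3"
  assumes surface: "compact_surface_complex T"
    and unit_triangles: "\<forall>t\<in>T. \<forall>p\<in>t. \<forall>q\<in>t. p \<noteq> q \<longrightarrow> dist (f p) (f q) = 1"
    and colours: "\<forall>p. col p \<in> {1, 2, 3}"
    and no_rainbow: "\<forall>p q r. \<not> rainbow_triangle col p q r"
  shows "even (card {e \<in> boundary_edges T. (col \<circ> f) ` e = {1, 2}})"
proof -
  have triangles: "finite T" "\<forall>t\<in>T. card t = 3"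
    and "\<forall>e\<in>cx_edges T. edge_degree T e = 1 \<or> edge_degree T e = 2"
    using surface by (simp_all add: compact_surface_complex_def)
  then have degrees: "\<forall>e\<in>cx_edges T. edge_degree T e \<le> 2"
    by fastforce
  show ?thesis
  proof (rule even_card_boundary_edges[OF triangles(1) _ degrees]; intro ballI)
    fix t assume "t \<in> T"
    then have "card t = 3"
      using triangles(2) by blast
    then show "finite t"
      using card.infinite by fastforce
    have "(col \<circ> f) ` t \<subseteq> {1, 2, 3}"
      using colours by auto
    moreover have "(col \<circ> f) ` t \<noteq> {1, 2, 3}"
      using non_rainbow_unit_triangle_misses_a_colour[OF no_rainbow \<open>card t = 3\<close>]
        unit_triangles \<open>t \<in> T\<close> by blast
    ultimately show "even (card {e. e \<subseteq> t \<and> card e = 2 \<and> (col \<circ> f) ` e = {1, 2}})"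
      by (rule even_card_edges_coloured_12_of_non_rainbow_triangle[OF \<open>card t = 3\<close>])
  qed
qed

theorem proposition5p9:
  fixes u v w x :: point3 and col :: "point3 \<Rightarrow> nat"
  assumes "unit_rhombus u v w x"
    and "\<forall>p. col p \<in> {1, 2, 3}"
    and "\<forall>p q r. \<not> rainbow_triangle col p q r"
    and "col u = 1" and "col v = 1" and "col w = 2" and "col x = 3"
  shows "\<not> can_be_domed [u, v, w, x]"
proof
  assume "can_be_domed [u, v, w, x]"
  then obtain T :: "nat set set" and f b
    where surface: "compact_surface_complex T"
      and unit_triangles: "\<forall>t\<in>T. \<forall>p\<in>t. \<forall>q\<in>t. p \<noteq> q \<longrightarrow> dist (f p) (f q) = 1"
      and length_eq: "length b = length [u, v, w, x]" and "distinct b"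
      and boundary: "boundary_edges T = {{b ! i, b ! ((i + 1) mod length b)} | i. i < length b}"
      and boundary_vertices: "\<forall>i < length b. f (b ! i) = [u, v, w, x] ! i"
    unfolding can_be_domed_def by (elim exE conjE) (rule that; assumption)
  have length_b: "length b = 4"
    using length_eq by simp
  have "(col \<circ> f) (b ! 0) = 1" "(col \<circ> f) (b ! 1) = 1"
    "(col \<circ> f) (b ! 2) = 2" "(col \<circ> f) (b ! 3) = 3"
    using boundary_vertices length_b assms(4-7) by simp_all
  then have "{e \<in> boundary_edges T. (col \<circ> f) ` e = {1, 2}} = {{b ! 1, b ! 2}}"
    unfolding boundary cyclic_edges_of_length_4[OF length_b] by (auto simp: doubleton_eq_iff)
  moreover have "even (card {e \<in> boundary_edges T. (col \<circ> f) ` e = {1, 2}})"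
    using even_card_boundary_edges_coloured_12[OF surface unit_triangles assms(2,3)] .
  ultimately show False
    by simp
qed

end
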